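(* Let $G$ be a noncompact connected real semisimple Lie group with finite centre and $K$ a maximal compact subgroup. Suppose that $f,f'\in C_c(G)$. Then pointwise on $G$ \[\mathcal{A}(f*f')\le\mathcal{A}(f)*\mathcal{A}(f').\] Hence, if $\phi_\lambda$ is a positive-real-valued spherical function, then \[\int_G\mathcal{A}(f*f')(x)\,\phi_\lambda(x)\,dx\le\int_G\mathcal{A}(f)(y)\,\phi_\lambda(y)\,dy\times\int_G\mathcal{A}(f')(x)\,\phi_\lambda(x)\,dx.\]
   Context: $dx$ is Haar measure on $G$, $dk$ normalized Haar measure on $K$, and $(f*f')(x)=\int_G f(y)f'(y^{-1}x)\,dy$. For a continuous function $u$ on $G$, $\mathcal{A}u(x)=\left(\int_K\int_K|u(kxk')|^2\,dk\,dk'\right)^{1/2}$. A spherical function is a $K$-bi-invariant continuous function $\phi$ on $G$ with $\int_K\phi(xky)\,dk=\phi(x)\phi(y)$ for all $x,y\in G$. *)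

theory Defs
  imports "HOL-Analysis.Analysis"
begin

text \<open>The group G is modelled by a type 'g of class group_add (written additively;
  commutativity is NOT assumed), carrying a Hausdorff topology.  x + y is the
  group product xy, - x is the inverse, 0 the identity.\<close>

definition topological_group :: "('g::{group_add,t2_space}) itself \<Rightarrow> bool" where
  "topological_group TYPE('g) \<longleftrightarrow>
     continuous_on UNIV (\<lambda>p::'g \<times> 'g. fst p + snd p) \<and> continuous_on UNIV (uminus :: 'g \<Rightarrow> 'g)"

definition locally_compact_group :: "('g::{group_add,t2_space}) itself \<Rightarrow> bool" where
  "locally_compact_group TYPE('g) \<longleftrightarrow>
     topological_group TYPE('g) \<and> (\<forall>x::'g. \<exists>U C. open U \<and> compact C \<and> x \<in> U \<and> U \<subseteq> C)"

definition group_center :: "('g::group_add) set" where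
  "group_center = {z. \<forall>g. z + g = g + z}"

definition is_subgroup :: "('g::group_add) set \<Rightarrow> bool" where
  "is_subgroup H \<longleftrightarrow> 0 \<in> H \<and> (\<forall>x\<in>H. \<forall>y\<in>H. x + y \<in> H) \<and> (\<forall>x\<in>H. - x \<in> H)"

definition maximal_compact_subgroup :: "('g::{group_add,t2_space}) set \<Rightarrow> bool" where
  "maximal_compact_subgroup K \<longleftrightarrow> is_subgroup K \<and> compact K \<and>
     (\<forall>H. is_subgroup H \<and> compact H \<and> K \<subseteq> H \<longrightarrow> H = K)"

text \<open>Haar measure on G (a left invariant Radon measure on the Borel sets).  Since a
  semisimple Lie group is unimodular, the Haar measure is also right invariant.\<close>

definition haar_measure :: "('g::{group_add,t2_space}) measure \<Rightarrow> bool" where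
  "haar_measure \<mu> \<longleftrightarrow> sets \<mu> = sets borel \<and>
     (\<forall>g. \<forall>A\<in>sets borel. emeasure \<mu> ((\<lambda>x. g + x) ` A) = emeasure \<mu> A) \<and>
     (\<forall>C. compact C \<longrightarrow> emeasure \<mu> C < \<infinity>) \<and>
     (\<forall>U. open U \<and> U \<noteq> {} \<longrightarrow> emeasure \<mu> U > 0)"

definition unimodular_haar_measure :: "('g::{group_add,t2_space}) measure \<Rightarrow> bool" where
  "unimodular_haar_measure \<mu> \<longleftrightarrow> haar_measure \<mu> \<and>
     (\<forall>g. \<forall>A\<in>sets borel. emeasure \<mu> ((\<lambda>x. x + g) ` A) = emeasure \<mu> A)"

definition normalized_haar_on :: "('g::{group_add,t2_space}) set \<Rightarrow> 'g measure \<Rightarrow> bool" where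
  "normalized_haar_on K \<nu> \<longleftrightarrow> space \<nu> = K \<and> sets \<nu> = sets (restrict_space borel K) \<and>
     emeasure \<nu> K = 1 \<and>
     (\<forall>k\<in>K. \<forall>A\<in>sets \<nu>. emeasure \<nu> ((\<lambda>x. k + x) ` A) = emeasure \<nu> A) \<and>
     (\<forall>k\<in>K. \<forall>A\<in>sets \<nu>. emeasure \<nu> ((\<lambda>x. x + k) ` A) = emeasure \<nu> A)"

definition Cc :: "('g::{group_add,t2_space} \<Rightarrow> complex) set" where
  "Cc = {f. continuous_on UNIV f \<and> compact (closure {x. f x \<noteq> 0})}"

definition conv :: "'g::group_add measure \<Rightarrow> ('g \<Rightarrow> 'b::{real_normed_field,second_countable_topology}) \<Rightarrow> ('g \<Rightarrow> 'b) \<Rightarrow> 'g \<Rightarrow> 'b" where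
  "conv \<mu> f f' x = (\<integral>y. f y * f' (- y + x) \<partial>\<mu>)"

definition Aop :: "'g::group_add measure \<Rightarrow> ('g \<Rightarrow> complex) \<Rightarrow> 'g \<Rightarrow> real" where
  "Aop \<nu> u x = sqrt (\<integral>k. (\<integral>k'. (cmod (u (k + x + k')))\<^sup>2 \<partial>\<nu>) \<partial>\<nu>)"

definition spherical_function :: "'g::{group_add,t2_space} set \<Rightarrow> 'g measure \<Rightarrow> ('g \<Rightarrow> 'c::{real_normed_field,second_countable_topology}) \<Rightarrow> bool" where
  "spherical_function K \<nu> \<phi> \<longleftrightarrow> continuous_on UNIV \<phi> \<and>
     (\<forall>k\<in>K. \<forall>k'\<in>K. \<forall>x. \<phi> (k + x + k') = \<phi> x) \<and>
     (\<forall>x y. (\<integral>k. \<phi> (x + k + y) \<partial>\<nu>) = \<phi> x * \<phi> y)"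

end

theory Submission
  imports Defs
begin

(*
  For k, k' in K the convolution u = f * f' satisfies, after translating the integration
  variable on the right by l in K and averaging over l,
    |u(k x k')| <= \<integral>\<^sub>G a(k,z) b(k',z) dz,
  where by Cauchy-Schwarz in l, a(k,z) is the L2(K)-norm of l |-> f(k z l) and b(k',z) that of
  l |-> f'(l^-1 z^-1 x k').  Minkowski's integral inequality in L2(K x K) bounds the L2-norm
  A u(x) of (k,k') |-> u(k x k') by \<integral>\<^sub>G ||a(.,z)|| ||b(.,z)|| dz, and these two
  norms are A f(z) and A f'(z^-1 x), the second by the inversion invariance of dk.
  Integrating against a spherical function, Fubini and the left K-invariance of A f' allow
  phi(z w) to be replaced by its K-average \<integral>\<^sub>K phi(z k w) dk = phi(z) phi(w), which
  splits the integral of (A f * A f') phi into a product.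

  Every function that occurs is continuous with compact support, so all integrals are taken
  against finite Borel measures carried by compact sets.
*)

section \<open>Topological preliminaries\<close>

lemma continuous_on_compose_UNIV:
  "continuous_on UNIV f \<Longrightarrow> continuous_on S g \<Longrightarrow> continuous_on S (\<lambda>x. f (g x))"
  using continuous_on_compose2[of UNIV f S g] by auto

lemma continuous_on_curried_compose:
  assumes "continuous_on UNIV (\<lambda>p. G (fst p) (snd p))"
    and "continuous_on S g" and "continuous_on S h"
  shows "continuous_on S (\<lambda>x. G (g x) (h x))"
  using continuous_on_compose_UNIV[OF assms(1) continuous_on_Pair[OF assms(2,3)]] by simp

lemma continuous_bounded_on_compact:
  fixes g :: "'a::topological_space \<Rightarrow> 'c::real_normed_vector"
  assumes "compact C" "continuous_on UNIV g"
  obtains B where "\<And>y. y \<in> C \<Longrightarrow> norm (g y) \<le> B"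
proof -
  have "compact (g ` C)"
    using assms by (intro compact_continuous_image continuous_on_subset[OF assms(2)]) auto
  then obtain B where "\<forall>z\<in>g ` C. norm z \<le> B"
    using compact_imp_bounded bounded_iff by metis
  then show ?thesis using that by auto
qed

lemma eventually_uniformly_close_on_compact:
  fixes G :: "'a::topological_space \<times> 'b::topological_space \<Rightarrow> 'c::metric_space"
  assumes G: "continuous_on UNIV G" and C: "compact C" and e: "e > 0"
  obtains U where "open U" "x0 \<in> U" "\<And>x y. x \<in> U \<Longrightarrow> y \<in> C \<Longrightarrow> dist (G (x, y)) (G (x0, y)) < e"
proof -
  let ?h = "\<lambda>p. dist (G p) (G (x0, snd p))"
  have "continuous_on UNIV (\<lambda>p. G (x0, snd p))"
    by (rule continuous_on_compose_UNIV[OF G]) (intro continuous_intros)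
  then have "continuous_on UNIV ?h" by (rule continuous_on_dist[OF G])
  then have "open (?h -` {..<e})"
    using continuous_on_open_vimage[of UNIV ?h] open_lessThan[of e]
      by (simp only: open_UNIV Int_UNIV_right)
  moreover have "{x0} \<times> C \<subseteq> ?h -` {..<e}" using e by auto
  ultimately have "\<exists>U. x0 \<in> U \<and> open U \<and> U \<times> C \<subseteq> ?h -` {..<e}"
    by (rule Elementary_Topology.tube_lemma[OF C])
  then obtain U where U: "x0 \<in> U \<and> open U \<and> U \<times> C \<subseteq> ?h -` {..<e}" ..
  show ?thesis
  proof (rule that)
    fix x y assume "x \<in> U" "y \<in> C"
    then show "dist (G (x, y)) (G (x0, y)) < e" using U by auto
  qed (use U in auto)
qed

lemma Hausdorff_space_euclidean_t2: "Hausdorff_space (euclidean :: 'a::t2_space topology)"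
  unfolding Hausdorff_space_def using hausdorff by (fastforce simp: disjnt_def)

lemma compact_separates_points_continuous:
  fixes S :: "'a::t2_space set"
  assumes S: "compact S" and x: "x \<in> S" "y \<in> S" "x \<noteq> y"
  shows "\<exists>u. continuous_on S u \<and> u x \<noteq> (u y :: real)"
proof -
  let ?X = "top_of_set S"
  have "compact_space ?X" using S by (intro compact_space_subtopology) simp
  moreover have "Hausdorff_space ?X"
    by (intro Hausdorff_space_subtopology Hausdorff_space_euclidean_t2)
  ultimately have N: "normal_space ?X" using compact_Hausdorff_or_regular_imp_normal_space by blast
  have "closedin ?X (S \<inter> {x})" by (intro closedin_closed_Int) simp
  moreover have "closedin ?X (S \<inter> {y})" by (intro closedin_closed_Int) simp
  moreover have "disjnt (S \<inter> {x}) (S \<inter> {y})" using x by (auto simp: disjnt_def)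
  ultimately obtain f where f: "continuous_map ?X euclideanreal f"
      "f ` (S \<inter> {x}) \<subseteq> {0}" "f ` (S \<inter> {y}) \<subseteq> {1}"
    using Urysohn_lemma_alt[OF N, of "S \<inter> {x}" "S \<inter> {y}" 0 1] by blast
  then show ?thesis using x by (intro exI[of _ f]) auto
qed

section \<open>Finite Borel measures carried by a compact set\<close>

definition carried_by_compact :: "'a::t2_space measure \<Rightarrow> 'a set \<Rightarrow> bool" where
  "carried_by_compact M C \<longleftrightarrow>
     finite_measure M \<and> sets M = sets borel \<and> compact C \<and> emeasure M (- C) = 0"

lemma carried_by_compactD:
  assumes "carried_by_compact M C"
  shows "finite_measure M" "sets M = sets borel" "compact C" "space M = UNIV"
  using assms sets_eq_imp_space_eq[of M borel] unfolding carried_by_compact_def by auto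

lemma AE_carried_by_compact:
  assumes M: "carried_by_compact M C"
  shows "AE x in M. x \<in> C"
proof -
  have "- C \<in> sets M"
    using carried_by_compactD[OF M] by (simp add: borel_comp borel_closed compact_imp_closed)
  then have "- C \<in> null_sets M"
    using M unfolding carried_by_compact_def by (intro null_setsI) auto
  then show ?thesis by (rule AE_I') auto
qed

lemma measurable_carried_by_compact:
  "carried_by_compact M C \<Longrightarrow> f \<in> borel_measurable borel \<Longrightarrow> f \<in> borel_measurable M"
  using measurable_cong_sets[of M borel] carried_by_compactD(2) by blast

lemma integrable_carried_by_compact:
  fixes g :: "'a::t2_space \<Rightarrow> 'c::{banach,second_countable_topology}"
  assumes M: "carried_by_compact M C" and g: "continuous_on UNIV g"
  shows "integrable M g"
proof -
  interpret finite_measure M using carried_by_compactD(1)[OF M] .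
  obtain B where B: "\<And>y. y \<in> C \<Longrightarrow> norm (g y) \<le> B"
    using continuous_bounded_on_compact carried_by_compactD(3)[OF M] g by blast
  show ?thesis
  proof (rule integrable_const_bound[where B=B])
    show "AE x in M. norm (g x) \<le> B" using AE_carried_by_compact[OF M] B by auto
    show "g \<in> borel_measurable M"
      using measurable_carried_by_compact[OF M borel_measurable_continuous_onI[OF g]] .
  qed
qed

lemma integral_cong_carried_by_compact:
  fixes f g :: "'a::t2_space \<Rightarrow> 'c::{banach,second_countable_topology}"
  assumes M: "carried_by_compact M C"
    and "f \<in> borel_measurable borel" "g \<in> borel_measurable borel"
    and "\<And>x. x \<in> C \<Longrightarrow> f x = g x"
  shows "integral\<^sup>L M f = integral\<^sup>L M g"
  using assms AE_carried_by_compact[OF M] measurable_carried_by_compact[OF M]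
  by (intro integral_cong_AE) (auto elim: eventually_mono)

lemma integral_mono_carried_by_compact:
  fixes f g :: "'a::t2_space \<Rightarrow> real"
  assumes M: "carried_by_compact M C"
    and "continuous_on UNIV f" "continuous_on UNIV g" and "\<And>x. x \<in> C \<Longrightarrow> f x \<le> g x"
  shows "integral\<^sup>L M f \<le> integral\<^sup>L M g"
  using assms AE_carried_by_compact[OF M] integrable_carried_by_compact[OF M]
  by (intro integral_mono_AE) (auto elim: eventually_mono)

lemma norm_integral_le_carried_by_compact:
  fixes g :: "'a::t2_space \<Rightarrow> 'c::{banach,second_countable_topology}"
  assumes M: "carried_by_compact M C" and g: "continuous_on UNIV g"
    and B: "\<And>y. y \<in> C \<Longrightarrow> norm (g y) \<le> B"
  shows "norm (integral\<^sup>L M g) \<le> measure M UNIV * B"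
proof -
  interpret finite_measure M using carried_by_compactD(1)[OF M] .
  have "norm (integral\<^sup>L M g) \<le> (\<integral>x. norm (g x) \<partial>M)"
    by (rule integral_norm_bound)
  also have "\<dots> \<le> (\<integral>x. B \<partial>M)"
    using M g B by (intro integral_mono_carried_by_compact continuous_intros) auto
  also have "\<dots> = measure M UNIV * B" using carried_by_compactD(4)[OF M] by simp
  finally show ?thesis .
qed

lemma continuous_on_parametric_integral:
  fixes G :: "'a::t2_space \<Rightarrow> 'b::t2_space \<Rightarrow> 'c::{banach,second_countable_topology}"
  assumes M: "carried_by_compact M C" and G: "continuous_on UNIV (\<lambda>p. G (fst p) (snd p))"
  shows "continuous_on UNIV (\<lambda>x. \<integral>y. G x y \<partial>M)"
proof -
  have Gx: "continuous_on UNIV (G x)" for x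
    using continuous_on_curried_compose[OF G, of UNIV "\<lambda>_. x" "\<lambda>y. y"] by simp
  have "isCont (\<lambda>x. \<integral>y. G x y \<partial>M) x0" for x0
    unfolding isCont_def tendsto_iff
  proof (intro allI impI)
    fix e :: real assume e: "e > 0"
    define D where "D = measure M UNIV + 1"
    have D: "D > 0" "measure M UNIV < D" unfolding D_def by (simp_all add: add_nonneg_pos)
    have "e / (2 * D) > 0" using e D by simp
    then obtain U where U: "open U" "x0 \<in> U"
      and close: "\<And>x y. x \<in> U \<Longrightarrow> y \<in> C \<Longrightarrow> dist (G x y) (G x0 y) < e / (2 * D)"
      using eventually_uniformly_close_on_compact[OF G carried_by_compactD(3)[OF M]]
      by (metis fst_conv snd_conv)
    have "dist (\<integral>y. G x y \<partial>M) (\<integral>y. G x0 y \<partial>M) < e" if "x \<in> U" for x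
    proof -
      have "dist (\<integral>y. G x y \<partial>M) (\<integral>y. G x0 y \<partial>M) = norm (\<integral>y. G x y - G x0 y \<partial>M)"
        using integrable_carried_by_compact[OF M Gx] by (simp add: dist_norm)
      also have "\<dots> \<le> measure M UNIV * (e / (2 * D))"
      proof (rule norm_integral_le_carried_by_compact[OF M])
        show "continuous_on UNIV (\<lambda>y. G x y - G x0 y)" by (intro continuous_on_diff Gx)
        show "norm (G x y - G x0 y) \<le> e / (2 * D)" if "y \<in> C" for y
          using close[OF \<open>x \<in> U\<close> that] by (simp add: dist_norm)
      qed
      also have "\<dots> \<le> D * (e / (2 * D))" using D e by (intro mult_right_mono) auto
      also have "\<dots> < e" using D e by simp
      finally show ?thesis .
    qed
    then show "\<forall>\<^sub>F x in at x0. dist (\<integral>y. G x y \<partial>M) (\<integral>y. G x0 y \<partial>M) < e"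
      unfolding eventually_at_topological using U by blast
  qed
  then show ?thesis by (simp add: continuous_on_eq_continuous_at)
qed

lemma borel_measurable_indicator_Times_fst:
  fixes u :: "'a::topological_space \<Rightarrow> real"
  assumes S: "S \<in> sets borel" and T: "T \<in> sets borel" and u: "continuous_on S u"
  shows "(\<lambda>p. indicator (S \<times> T) p * u (fst p)) \<in> borel_measurable (borel \<Otimes>\<^sub>M borel)"
proof -
  have "(\<lambda>z. indicator S z *\<^sub>R u z) \<in> borel_measurable borel"
    using S u by (rule borel_measurable_continuous_on_indicator)
  then have "(\<lambda>p. (indicator S (fst p) *\<^sub>R u (fst p)) * indicator T (snd p))
      \<in> borel_measurable (borel \<Otimes>\<^sub>M borel)"
    using T by measurable
  moreover have "(\<lambda>p. (indicator S (fst p) *\<^sub>R u (fst p)) * indicator T (snd p))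
      = (\<lambda>p. indicator (S \<times> T) p * u (fst p))"
    by (auto simp: indicator_def fun_eq_iff)
  ultimately show ?thesis by simp
qed

lemma borel_measurable_indicator_Times_snd:
  fixes u :: "'b::topological_space \<Rightarrow> real"
  assumes S: "S \<in> sets borel" and T: "T \<in> sets borel" and u: "continuous_on T u"
  shows "(\<lambda>p. indicator (S \<times> T) p * u (snd p)) \<in> borel_measurable (borel \<Otimes>\<^sub>M borel)"
proof -
  have "(\<lambda>z. indicator T z *\<^sub>R u z) \<in> borel_measurable borel"
    using T u by (rule borel_measurable_continuous_on_indicator)
  then have "(\<lambda>p. indicator S (fst p) * (indicator T (snd p) *\<^sub>R u (snd p)))
      \<in> borel_measurable (borel \<Otimes>\<^sub>M borel)"
    using S by measurable
  moreover have "(\<lambda>p. indicator S (fst p) * (indicator T (snd p) *\<^sub>R u (snd p)))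
      = (\<lambda>p. indicator (S \<times> T) p * u (snd p))"
    by (auto simp: indicator_def fun_eq_iff)
  ultimately show ?thesis by simp
qed

text \<open>For spaces that are not second countable the product \<sigma>-algebra may be smaller than the
  Borel \<sigma>-algebra of the product, so measurability is obtained by Stone-Weierstrass
  approximation with the functions of the two preceding lemmas.\<close>

lemma borel_measurable_indicator_Times_continuous:
  fixes G :: "'a::t2_space \<times> 'b::t2_space \<Rightarrow> real"
  assumes G: "continuous_on UNIV G" and S: "compact S" and T: "compact T"
  shows "(\<lambda>p. indicator (S \<times> T) p * G p) \<in> borel_measurable (borel \<Otimes>\<^sub>M borel)"
proof -
  define R :: "('a \<times> 'b \<Rightarrow> real) set" where "R = {h. continuous_on (S \<times> T) h \<and>
     (\<lambda>p. indicator (S \<times> T) p * h p) \<in> borel_measurable (borel \<Otimes>\<^sub>M borel)}"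
  have Sb: "S \<in> sets borel" using S by (simp add: borel_closed compact_imp_closed)
  have Tb: "T \<in> sets borel" using T by (simp add: borel_closed compact_imp_closed)
  have fst_R: "(\<lambda>p. u (fst p)) \<in> R" if "continuous_on S u" for u
  proof -
    have "continuous_on (S \<times> T) (\<lambda>p. u (fst p))"
      by (rule continuous_on_compose2[OF that continuous_on_fst[OF continuous_on_id]]) auto
    then show ?thesis
      unfolding R_def using borel_measurable_indicator_Times_fst[OF Sb Tb that] by blast
  qed
  have snd_R: "(\<lambda>p. u (snd p)) \<in> R" if "continuous_on T u" for u
  proof -
    have "continuous_on (S \<times> T) (\<lambda>p. u (snd p))"
      by (rule continuous_on_compose2[OF that continuous_on_snd[OF continuous_on_id]]) auto
    then show ?thesis
      unfolding R_def using borel_measurable_indicator_Times_snd[OF Sb Tb that] by blast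
  qed
  interpret PR: function_ring_on R "S \<times> T"
  proof unfold_locales
    show "compact (S \<times> T)" using S T by (rule compact_Times)
    show "continuous_on (S \<times> T) f" if "f \<in> R" for f using that unfolding R_def by blast
    show "(\<lambda>x. f x + g x) \<in> R" if "f \<in> R" "g \<in> R" for f g
    proof -
      have "(\<lambda>p. indicator (S \<times> T) p * f p + indicator (S \<times> T) p * g p)
          \<in> borel_measurable (borel \<Otimes>\<^sub>M borel)"
        using that unfolding R_def by (auto intro: borel_measurable_add)
      moreover have "continuous_on (S \<times> T) (\<lambda>x. f x + g x)"
        using that unfolding R_def by (intro continuous_on_add) auto
      ultimately show ?thesis unfolding R_def by (simp add: distrib_left)
    qed
    show "(\<lambda>x. f x * g x) \<in> R" if "f \<in> R" "g \<in> R" for f g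
    proof -
      have "(\<lambda>p. (indicator (S \<times> T) p * f p) * (indicator (S \<times> T) p * g p))
          \<in> borel_measurable (borel \<Otimes>\<^sub>M borel)"
        using that unfolding R_def by (auto intro: borel_measurable_times)
      moreover have "(\<lambda>p. (indicator (S \<times> T) p * f p) * (indicator (S \<times> T) p * g p))
          = (\<lambda>p. indicator (S \<times> T) p * (f p * g p))"
        by (auto simp: indicator_def)
      moreover have "continuous_on (S \<times> T) (\<lambda>x. f x * g x)"
        using that unfolding R_def by (intro continuous_on_mult) auto
      ultimately show ?thesis unfolding R_def by simp
    qed
    show "(\<lambda>_. c) \<in> R" for c
      using fst_R[of "\<lambda>_. c"] by simp
    show "\<exists>f\<in>R. f x \<noteq> f y" if xy: "x \<in> S \<times> T" "y \<in> S \<times> T" "x \<noteq> y" for x y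
    proof (cases "fst x = fst y")
      case False
      have "fst x \<in> S" "fst y \<in> S" using xy by (auto simp: mem_Times_iff)
      then obtain u :: "'a \<Rightarrow> real" where u: "continuous_on S u" "u (fst x) \<noteq> u (fst y)"
        using compact_separates_points_continuous[OF S _ _ False] by blast
      then show ?thesis using fst_R[OF u(1)] by (intro bexI[of _ "\<lambda>p. u (fst p)"]) simp_all
    next
      case True
      then have ne: "snd x \<noteq> snd y" using xy by (simp add: prod_eq_iff)
      have "snd x \<in> T" "snd y \<in> T" using xy by (auto simp: mem_Times_iff)
      then obtain u :: "'b \<Rightarrow> real" where u: "continuous_on T u" "u (snd x) \<noteq> u (snd y)"
        using compact_separates_points_continuous[OF T _ _ ne] by blast
      then show ?thesis using snd_R[OF u(1)] by (intro bexI[of _ "\<lambda>p. u (snd p)"]) simp_all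
    qed
  qed
  have cG: "continuous_on (S \<times> T) G" using G continuous_on_subset by blast
  have "\<exists>g\<in>R. \<forall>x\<in>S \<times> T. \<bar>G x - g x\<bar> < 1 / (Suc n)" for n
    using PR.Stone_Weierstrass_basic[OF cG, of "1 / Suc n"] by simp
  then obtain g where g: "\<And>n. g n \<in> R" "\<And>n x. x \<in> S \<times> T \<Longrightarrow> \<bar>G x - g n x\<bar> < 1 / Suc n"
    by metis
  show ?thesis
  proof (rule borel_measurable_LIMSEQ_real)
    show "(\<lambda>p. indicator (S \<times> T) p * g n p) \<in> borel_measurable (borel \<Otimes>\<^sub>M borel)" for n
      using g(1)[of n] unfolding R_def by blast
    show "(\<lambda>n. indicator (S \<times> T) p * g n p) \<longlonglongrightarrow> indicator (S \<times> T) p * G p" for p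
    proof (cases "p \<in> S \<times> T")
      case True
      have "(\<lambda>n. g n p) \<longlonglongrightarrow> G p"
      proof (rule LIMSEQ_I)
        fix r :: real assume r: "r > 0"
        obtain N where N: "1 / Suc N < r" using r by (meson nat_approx_posE)
        have "norm (g n p - G p) < r" if "n \<ge> N" for n
        proof -
          have "1 / real (Suc n) \<le> 1 / Suc N" using that by (intro divide_left_mono) auto
          then show ?thesis using g(2)[OF True, of n] N by (simp add: abs_minus_commute)
        qed
        then show "\<exists>no. \<forall>n\<ge>no. norm (g n p - G p) < r" by blast
      qed
      then show ?thesis using True by simp
    next
      case False
      then show ?thesis by simp
    qed
  qed
qed

lemma integrable_indicator_Times_continuous:
  fixes G :: "'a::t2_space \<Rightarrow> 'b::t2_space \<Rightarrow> real"
  assumes M1: "carried_by_compact M1 S" and M2: "carried_by_compact M2 T"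
    and G: "continuous_on UNIV (\<lambda>p. G (fst p) (snd p))"
  shows "integrable (M1 \<Otimes>\<^sub>M M2) (\<lambda>p. indicator (S \<times> T) p * G (fst p) (snd p))"
proof -
  interpret finite_measure "M1 \<Otimes>\<^sub>M M2"
    using carried_by_compactD(1)[OF M2] carried_by_compactD(1)[OF M1]
    by (rule finite_measure_pair_measure)
  have S: "compact S" and T: "compact T" using carried_by_compactD(3) M1 M2 by blast+
  obtain B where B: "\<And>p. p \<in> S \<times> T \<Longrightarrow> norm (G (fst p) (snd p)) \<le> B"
    using continuous_bounded_on_compact[OF compact_Times[OF S T] G] by blast
  show ?thesis
  proof (rule integrable_const_bound[where B = "max B 0"])
    have "norm (indicator (S \<times> T) p * G (fst p) (snd p)) \<le> max B 0" for p
      using B[of p] by (cases "p \<in> S \<times> T") auto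
    then show "AE p in M1 \<Otimes>\<^sub>M M2. norm (indicator (S \<times> T) p * G (fst p) (snd p)) \<le> max B 0"
      by simp
    show "(\<lambda>p. indicator (S \<times> T) p * G (fst p) (snd p)) \<in> borel_measurable (M1 \<Otimes>\<^sub>M M2)"
      using borel_measurable_indicator_Times_continuous[OF G S T]
        measurable_cong_sets[OF sets_pair_measure_cong[OF carried_by_compactD(2)[OF M1]
          carried_by_compactD(2)[OF M2]] refl]
      by blast
  qed
qed

lemma integral_integral_indicator_Times:
  fixes G :: "'a::t2_space \<Rightarrow> 'b::t2_space \<Rightarrow> real"
  assumes M1: "carried_by_compact M1 S" and M2: "carried_by_compact M2 T"
    and G: "continuous_on UNIV (\<lambda>p. G (fst p) (snd p))"
  shows "(\<integral>x. \<integral>y. indicator (S \<times> T) (x, y) * G x y \<partial>M2 \<partial>M1) = (\<integral>x. \<integral>y. G x y \<partial>M2 \<partial>M1)"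
proof (rule integral_cong_AE)
  interpret M2: finite_measure M2 using carried_by_compactD(1)[OF M2] .
  have G'm: "(\<lambda>p. indicator (S \<times> T) p * G (fst p) (snd p)) \<in> borel_measurable (M1 \<Otimes>\<^sub>M M2)"
    using integrable_indicator_Times_continuous[OF M1 M2 G] by (rule borel_measurable_integrable)
  then show "(\<lambda>x. \<integral>y. indicator (S \<times> T) (x, y) * G x y \<partial>M2) \<in> borel_measurable M1"
    using M2.borel_measurable_lebesgue_integral[of "\<lambda>x y. indicator (S \<times> T) (x, y) * G x y"]
    by (simp add: case_prod_beta')
  show "(\<lambda>x. \<integral>y. G x y \<partial>M2) \<in> borel_measurable M1"
    by (intro measurable_carried_by_compact[OF M1] borel_measurable_continuous_onI
        continuous_on_parametric_integral[OF M2 G])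
  have "(\<integral>y. indicator (S \<times> T) (x, y) * G x y \<partial>M2) = (\<integral>y. G x y \<partial>M2)" if "x \<in> S" for x
  proof (rule integral_cong_AE)
    show "(\<lambda>y. indicator (S \<times> T) (x, y) * G x y) \<in> borel_measurable M2"
      using measurable_Pair2[OF G'm] carried_by_compactD(4)[OF M1] by simp
    show "G x \<in> borel_measurable M2"
      using continuous_on_curried_compose[OF G, of UNIV "\<lambda>_. x" "\<lambda>y. y"]
      by (intro measurable_carried_by_compact[OF M2] borel_measurable_continuous_onI) simp
    show "AE y in M2. indicator (S \<times> T) (x, y) * G x y = G x y"
      using AE_carried_by_compact[OF M2] that by (auto elim: eventually_mono)
  qed
  then show "AE x in M1. (\<integral>y. indicator (S \<times> T) (x, y) * G x y \<partial>M2) = (\<integral>y. G x y \<partial>M2)"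
    using AE_carried_by_compact[OF M1] by (auto elim: eventually_mono)
qed

lemma Fubini_carried_by_compact:
  fixes G :: "'a::t2_space \<Rightarrow> 'b::t2_space \<Rightarrow> real"
  assumes M1: "carried_by_compact M1 S" and M2: "carried_by_compact M2 T"
    and G: "continuous_on UNIV (\<lambda>p. G (fst p) (snd p))"
  shows "(\<integral>x. \<integral>y. G x y \<partial>M2 \<partial>M1) = (\<integral>y. \<integral>x. G x y \<partial>M1 \<partial>M2)"
proof -
  interpret M1: finite_measure M1 using carried_by_compactD(1)[OF M1] .
  interpret M2: finite_measure M2 using carried_by_compactD(1)[OF M2] .
  interpret P: pair_sigma_finite M1 M2 by unfold_locales
  have G': "continuous_on UNIV (\<lambda>p. G (snd p) (fst p))"
    by (intro continuous_on_curried_compose[OF G] continuous_intros)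
  have "(\<integral>x. \<integral>y. G x y \<partial>M2 \<partial>M1) = (\<integral>x. \<integral>y. indicator (S \<times> T) (x, y) * G x y \<partial>M2 \<partial>M1)"
    using integral_integral_indicator_Times[OF M1 M2 G] by simp
  also have "\<dots> = (\<integral>y. \<integral>x. indicator (S \<times> T) (x, y) * G x y \<partial>M1 \<partial>M2)"
    using P.Fubini_integral[of "\<lambda>x y. indicator (S \<times> T) (x, y) * G x y"]
      integrable_indicator_Times_continuous[OF M1 M2 G] by (simp add: case_prod_beta')
  also have "\<dots> = (\<integral>y. \<integral>x. G x y \<partial>M1 \<partial>M2)"
    using integral_integral_indicator_Times[OF M2 M1 G']
    by (simp add: indicator_def mem_Times_iff conj_commute)
  finally show ?thesis .
qed

section \<open>The Cauchy-Schwarz and Minkowski inequalities\<close>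

lemma le_sqrt_mult_if_quadratic_nonneg:
  fixes A B C :: real
  assumes A: "A \<ge> 0" and B: "B \<ge> 0" and q: "\<And>t. t\<^sup>2 * A - 2 * t * C + B \<ge> 0"
  shows "C \<le> sqrt A * sqrt B"
proof (cases "A = 0")
  case True
  show ?thesis
  proof (rule ccontr)
    assume "\<not> ?thesis"
    then have "C > 0" using True by simp
    then have "((B + 1) / (2 * C))\<^sup>2 * A - 2 * ((B + 1) / (2 * C)) * C + B < 0"
      using True by (simp add: field_simps)
    then show False using q by (meson not_le)
  qed
next
  case False
  with A have A': "A > 0" by simp
  have "(C / A)\<^sup>2 * A - 2 * (C / A) * C + B \<ge> 0" by (rule q)
  then have "C\<^sup>2 \<le> A * B" using A' by (simp add: power2_eq_square field_simps)
  then have "\<bar>C\<bar> \<le> sqrt (A * B)"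
    using real_sqrt_le_mono[of "C\<^sup>2" "A * B"] by simp
  then show ?thesis by (simp add: real_sqrt_mult)
qed

lemma Cauchy_Schwarz_integral:
  fixes f g :: "'a \<Rightarrow> real"
  assumes "integrable M (\<lambda>x. (f x)\<^sup>2)" "integrable M (\<lambda>x. (g x)\<^sup>2)" "integrable M (\<lambda>x. f x * g x)"
  shows "(\<integral>x. f x * g x \<partial>M) \<le> sqrt (\<integral>x. (f x)\<^sup>2 \<partial>M) * sqrt (\<integral>x. (g x)\<^sup>2 \<partial>M)"
proof (rule le_sqrt_mult_if_quadratic_nonneg)
  show "0 \<le> (\<integral>x. (f x)\<^sup>2 \<partial>M)" "0 \<le> (\<integral>x. (g x)\<^sup>2 \<partial>M)" by simp_all
  fix t :: real
  have "0 \<le> (\<integral>x. (t * f x - g x)\<^sup>2 \<partial>M)" by simp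
  also have "\<dots> = (\<integral>x. t\<^sup>2 * (f x)\<^sup>2 - 2 * t * (f x * g x) + (g x)\<^sup>2 \<partial>M)"
    by (simp add: power2_eq_square algebra_simps)
  also have "\<dots> = t\<^sup>2 * (\<integral>x. (f x)\<^sup>2 \<partial>M) - 2 * t * (\<integral>x. f x * g x \<partial>M) + (\<integral>x. (g x)\<^sup>2 \<partial>M)"
    using assms by simp
  finally show "0 \<le> t\<^sup>2 * (\<integral>x. (f x)\<^sup>2 \<partial>M) - 2 * t * (\<integral>x. f x * g x \<partial>M) + (\<integral>x. (g x)\<^sup>2 \<partial>M)" .
qed

lemma Cauchy_Schwarz_carried_by_compact:
  fixes f g :: "'a::t2_space \<Rightarrow> real"
  assumes "carried_by_compact M C" "continuous_on UNIV f" "continuous_on UNIV g"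
  shows "(\<integral>x. f x * g x \<partial>M) \<le> sqrt (\<integral>x. (f x)\<^sup>2 \<partial>M) * sqrt (\<integral>x. (g x)\<^sup>2 \<partial>M)"
  using assms by (intro Cauchy_Schwarz_integral integrable_carried_by_compact continuous_intros)

lemma integral_kernel_le_L2_norms:
  fixes P :: "'a::t2_space \<Rightarrow> 'b::t2_space \<Rightarrow> real" and u :: "'a \<Rightarrow> real" and w :: "'b \<Rightarrow> real"
  assumes M1: "carried_by_compact M1 S" and M2: "carried_by_compact M2 T"
    and P: "continuous_on UNIV (\<lambda>p. P (fst p) (snd p))"
    and u: "continuous_on UNIV u" and w: "continuous_on UNIV w" and u_nonneg: "\<And>x. u x \<ge> 0"
  shows "(\<integral>x. \<integral>y. P x y * (u x * w y) \<partial>M2 \<partial>M1)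
    \<le> sqrt (\<integral>x. (u x)\<^sup>2 \<partial>M1) * sqrt (\<integral>y. (w y)\<^sup>2 \<partial>M2)
      * sqrt (\<integral>x. \<integral>y. (P x y)\<^sup>2 \<partial>M2 \<partial>M1)"
proof -
  define R where "R x = sqrt (\<integral>y. (P x y)\<^sup>2 \<partial>M2)" for x
  define W where "W = sqrt (\<integral>y. (w y)\<^sup>2 \<partial>M2)"
  note cP = continuous_on_curried_compose[OF P] and cw = continuous_on_compose_UNIV[OF w]
  have cR: "continuous_on UNIV R"
    unfolding R_def
    by (intro continuous_on_real_sqrt continuous_on_parametric_integral[OF M2] continuous_intros cP)
  have "(\<integral>x. \<integral>y. P x y * (u x * w y) \<partial>M2 \<partial>M1) = (\<integral>x. u x * (\<integral>y. P x y * w y \<partial>M2) \<partial>M1)"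
    by (simp only: mult.left_commute[of "P _ _"] integral_mult_right_zero)
  also have "\<dots> \<le> (\<integral>x. u x * (R x * W) \<partial>M1)"
  proof (rule integral_mono_carried_by_compact[OF M1])
    show "continuous_on UNIV (\<lambda>x. u x * (\<integral>y. P x y * w y \<partial>M2))"
      by (intro continuous_on_parametric_integral[OF M2] continuous_intros u cw cP)
    show "continuous_on UNIV (\<lambda>x. u x * (R x * W))" by (intro continuous_intros u cR)
    show "u x * (\<integral>y. P x y * w y \<partial>M2) \<le> u x * (R x * W)" for x
      unfolding R_def W_def using u_nonneg
      by (intro mult_left_mono Cauchy_Schwarz_carried_by_compact[OF M2] continuous_intros w cP)
  qed
  also have "\<dots> = W * (\<integral>x. u x * R x \<partial>M1)"
  proof -
    have "u x * (R x * W) = W * (u x * R x)" for x by (simp only: mult_ac)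
    then show ?thesis by (simp only: integral_mult_right_zero)
  qed
  also have "\<dots> \<le> W * (sqrt (\<integral>x. (u x)\<^sup>2 \<partial>M1) * sqrt (\<integral>x. (R x)\<^sup>2 \<partial>M1))"
    unfolding W_def
    by (intro mult_left_mono Cauchy_Schwarz_carried_by_compact[OF M1] continuous_intros u cR) simp
  also have "(\<integral>x. (R x)\<^sup>2 \<partial>M1) = (\<integral>x. \<integral>y. (P x y)\<^sup>2 \<partial>M2 \<partial>M1)" by (simp add: R_def)
  finally show ?thesis unfolding W_def by (simp only: mult_ac)
qed

text \<open>Minkowski's integral inequality for the \<open>L\<^sup>2(M\<^sub>1 \<Otimes> M\<^sub>2)\<close> norm of
  \<open>\<integral> a x z b y z dz\<close>, proved by duality: pairing the left-hand side with itself and bounding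
  the pairing with the preceding lemma for each \<open>z\<close>.\<close>

lemma Minkowski_integral_L2_product:
  fixes a :: "'a::t2_space \<Rightarrow> 'c::t2_space \<Rightarrow> real" and b :: "'b::t2_space \<Rightarrow> 'c \<Rightarrow> real"
  assumes M1: "carried_by_compact M1 S" and M2: "carried_by_compact M2 T"
    and M: "carried_by_compact M C"
    and a: "continuous_on UNIV (\<lambda>p. a (fst p) (snd p))"
    and b: "continuous_on UNIV (\<lambda>p. b (fst p) (snd p))"
    and a_nonneg: "\<And>x z. a x z \<ge> 0"
  shows "sqrt (\<integral>x. \<integral>y. (\<integral>z. a x z * b y z \<partial>M)\<^sup>2 \<partial>M2 \<partial>M1)
    \<le> (\<integral>z. sqrt (\<integral>x. (a x z)\<^sup>2 \<partial>M1) * sqrt (\<integral>y. (b y z)\<^sup>2 \<partial>M2) \<partial>M)"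
proof -
  define P where "P x y = (\<integral>z. a x z * b y z \<partial>M)" for x y
  define Q where "Q = (\<integral>x. \<integral>y. (P x y)\<^sup>2 \<partial>M2 \<partial>M1)"
  define \<alpha> where "\<alpha> z = sqrt (\<integral>x. (a x z)\<^sup>2 \<partial>M1)" for z
  define \<beta> where "\<beta> z = sqrt (\<integral>y. (b y z)\<^sup>2 \<partial>M2)" for z
  note ca = continuous_on_curried_compose[OF a] and cb = continuous_on_curried_compose[OF b]
  have cP: "continuous_on UNIV (\<lambda>p. P (fst p) (snd p))"
    unfolding P_def
    by (rule continuous_on_parametric_integral[OF M]) (intro continuous_intros ca cb)
  note cP' = continuous_on_curried_compose[OF cP]
  have Q_nonneg: "Q \<ge> 0" unfolding Q_def by simp
  have "Q = (\<integral>x. \<integral>y. \<integral>z. P x y * (a x z * b y z) \<partial>M \<partial>M2 \<partial>M1)"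
    unfolding Q_def by (simp add: power2_eq_square P_def)
  also have "\<dots> = (\<integral>x. \<integral>z. \<integral>y. P x y * (a x z * b y z) \<partial>M2 \<partial>M \<partial>M1)"
    by (subst Fubini_carried_by_compact[OF M2 M]) (intro continuous_intros ca cb cP', simp)
  also have "\<dots> = (\<integral>z. \<integral>x. \<integral>y. P x y * (a x z * b y z) \<partial>M2 \<partial>M1 \<partial>M)"
    by (intro Fubini_carried_by_compact[OF M1 M] continuous_on_parametric_integral[OF M2]
        continuous_intros ca cb cP')
  also have "\<dots> \<le> (\<integral>z. \<alpha> z * \<beta> z * sqrt Q \<partial>M)"
  proof (rule integral_mono_carried_by_compact[OF M])
    show "continuous_on UNIV (\<lambda>z. \<integral>x. \<integral>y. P x y * (a x z * b y z) \<partial>M2 \<partial>M1)"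
      by (intro continuous_on_parametric_integral[OF M1] continuous_on_parametric_integral[OF M2]
          continuous_intros ca cb cP')
    show "continuous_on UNIV (\<lambda>z. \<alpha> z * \<beta> z * sqrt Q)"
      unfolding \<alpha>_def \<beta>_def
      by (intro continuous_intros continuous_on_parametric_integral[OF M1]
          continuous_on_parametric_integral[OF M2] ca cb)
    show "(\<integral>x. \<integral>y. P x y * (a x z * b y z) \<partial>M2 \<partial>M1) \<le> \<alpha> z * \<beta> z * sqrt Q" for z
      unfolding \<alpha>_def \<beta>_def Q_def
      by (intro integral_kernel_le_L2_norms[OF M1 M2 cP] continuous_intros ca cb a_nonneg)
  qed
  also have "\<dots> = (\<integral>z. \<alpha> z * \<beta> z \<partial>M) * sqrt Q" by simp
  finally have "sqrt Q * sqrt Q \<le> (\<integral>z. \<alpha> z * \<beta> z \<partial>M) * sqrt Q"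
    using Q_nonneg by simp
  moreover have "(\<integral>z. \<alpha> z * \<beta> z \<partial>M) \<ge> 0"
    unfolding \<alpha>_def \<beta>_def by (intro integral_nonneg_AE AE_I2) simp
  ultimately have "sqrt Q \<le> (\<integral>z. \<alpha> z * \<beta> z \<partial>M)"
    using Q_nonneg mult_le_cancel_right_pos[of "sqrt Q" "sqrt Q"]
    by (cases "Q = 0") auto
  then show ?thesis unfolding Q_def P_def \<alpha>_def \<beta>_def .
qed

section \<open>Haar integrals on a unimodular topological group\<close>

lemma continuous_on_group_add:
  fixes f g :: "'a::topological_space \<Rightarrow> 'g::{group_add,t2_space}"
  assumes "topological_group TYPE('g)" "continuous_on S f" "continuous_on S g"
  shows "continuous_on S (\<lambda>x. f x + g x)"
proof -
  have "continuous_on UNIV (\<lambda>p::'g \<times> 'g. fst p + snd p)"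
    using assms(1) unfolding topological_group_def by blast
  from continuous_on_compose_UNIV[OF this continuous_on_Pair[OF assms(2,3)]] show ?thesis by simp
qed

lemma continuous_on_group_minus:
  fixes f :: "'a::topological_space \<Rightarrow> 'g::{group_add,t2_space}"
  assumes "topological_group TYPE('g)" "continuous_on S f"
  shows "continuous_on S (\<lambda>x. - f x)"
  using assms continuous_on_compose_UNIV[of uminus] unfolding topological_group_def by blast

lemma compact_set_plus_group:
  fixes A B :: "'g::{group_add,t2_space} set"
  assumes "topological_group TYPE('g)" "compact A" "compact B"
  shows "compact (A + B)"
proof -
  have "continuous_on (A \<times> B) (\<lambda>p. fst p + snd p)"
    using assms(1) by (intro continuous_on_group_add continuous_intros)
  then have "compact ((\<lambda>p. fst p + snd p) ` (A \<times> B))"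
    using assms(2,3) by (intro compact_continuous_image compact_Times)
  then show ?thesis by (simp add: set_plus_image case_prod_beta')
qed

lemma notin_set_plus_translate:
  fixes x :: "'g::group_add"
  assumes "x \<notin> K + S + K" "k \<in> K" "k' \<in> K" "is_subgroup K"
  shows "k + x + k' \<notin> S"
proof
  assume "k + x + k' \<in> S"
  with assms have "- k + (k + x + k') + - k' \<in> K + S + K"
    unfolding is_subgroup_def by (intro set_plus_intro) auto
  with assms(1) show False by (simp add: add.assoc)
qed

lemma integral_invariant_bij:
  fixes g :: "'a::topological_space \<Rightarrow> 'c::{banach,second_countable_topology}"
  assumes M: "sets M = sets borel" and \<tau>: "\<tau> \<in> borel_measurable borel"
    and \<sigma>\<tau>: "\<And>x. \<sigma> (\<tau> x) = x" and \<tau>\<sigma>: "\<And>y. \<tau> (\<sigma> y) = y"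
    and invariant: "\<And>A. A \<in> sets borel \<Longrightarrow> emeasure M (\<sigma> ` A) = emeasure M A"
    and g: "g \<in> borel_measurable borel"
  shows "(\<integral>x. g (\<tau> x) \<partial>M) = integral\<^sup>L M g"
proof -
  have \<tau>M: "\<tau> \<in> borel_measurable M"
    using \<tau> measurable_cong_sets[OF M refl] by blast
  have "distr M borel \<tau> = M"
  proof (rule measure_eqI)
    fix A assume "A \<in> sets (distr M borel \<tau>)"
    then have A: "A \<in> sets borel" by simp
    have "\<tau> -` A = \<sigma> ` A"
    proof (intro equalityI subsetI)
      fix x assume "x \<in> \<tau> -` A"
      then show "x \<in> \<sigma> ` A"
        using image_eqI[of x \<sigma> "\<tau> x" A] \<sigma>\<tau>[of x] by simp
    qed (use \<tau>\<sigma> in auto)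
    moreover have "space M = UNIV" using M by (metis sets_eq_imp_space_eq space_borel)
    ultimately show "emeasure (distr M borel \<tau>) A = emeasure M A"
      using emeasure_distr[OF \<tau>M A] invariant[OF A]
      by simp
  qed (simp add: M)
  then show ?thesis
    using integral_distr[OF \<tau>M g] by simp
qed

locale unimodular_group =
  fixes \<mu> :: "'g::{group_add,t2_space} measure"
  assumes topological_group: "topological_group TYPE('g)"
    and unimodular: "unimodular_haar_measure \<mu>"
begin

lemmas continuous_on_add [continuous_intros] = continuous_on_group_add[OF topological_group]

lemmas continuous_on_minus [continuous_intros] = continuous_on_group_minus[OF topological_group]

lemma sets_mu: "sets \<mu> = sets borel"
  using unimodular unfolding unimodular_haar_measure_def haar_measure_def by auto

lemma integral_translate_left:
  fixes g :: "'g \<Rightarrow> 'c::{banach,second_countable_topology}"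
  assumes "g \<in> borel_measurable borel"
  shows "(\<integral>x. g (a + x) \<partial>\<mu>) = integral\<^sup>L \<mu> g"
proof (rule integral_invariant_bij[OF sets_mu _ _ _ _ assms, where \<sigma> = "\<lambda>x. - a + x"])
  show "(\<lambda>x. a + x) \<in> borel_measurable borel"
    by (intro borel_measurable_continuous_onI continuous_intros)
  show "emeasure \<mu> ((\<lambda>x. - a + x) ` A) = emeasure \<mu> A" if "A \<in> sets borel" for A
    using unimodular that unfolding unimodular_haar_measure_def haar_measure_def by auto
qed (simp_all add: add.assoc[symmetric])

lemma integral_translate_right:
  fixes g :: "'g \<Rightarrow> 'c::{banach,second_countable_topology}"
  assumes "g \<in> borel_measurable borel"
  shows "(\<integral>x. g (x + a) \<partial>\<mu>) = integral\<^sup>L \<mu> g"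
proof (rule integral_invariant_bij[OF sets_mu _ _ _ _ assms, where \<sigma> = "\<lambda>x. x - a"])
  show "(\<lambda>x. x + a) \<in> borel_measurable borel"
    by (intro borel_measurable_continuous_onI continuous_intros)
  show "emeasure \<mu> ((\<lambda>x. x - a) ` A) = emeasure \<mu> A" if "A \<in> sets borel" for A
    using unimodular that unfolding unimodular_haar_measure_def by (auto dest: spec[of _ "- a"])
qed simp_all

lemma integral_translate_both:
  fixes g :: "'g \<Rightarrow> 'c::{banach,second_countable_topology}"
  assumes g: "g \<in> borel_measurable borel"
  shows "(\<integral>z. g (a + z + b) \<partial>\<mu>) = integral\<^sup>L \<mu> g"
proof -
  have "(\<lambda>w. g (w + b)) \<in> borel_measurable borel"
    using g by (rule measurable_compose[rotated])
      (intro borel_measurable_continuous_onI continuous_intros)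
  then have "(\<integral>z. g (a + z + b) \<partial>\<mu>) = (\<integral>z. g (z + b) \<partial>\<mu>)"
    by (rule integral_translate_left)
  also have "\<dots> = integral\<^sup>L \<mu> g" using g by (rule integral_translate_right)
  finally show ?thesis .
qed

definition mu_on :: "'g set \<Rightarrow> 'g measure" where
  "mu_on C = density \<mu> (indicator C)"

lemma carried_by_compact_mu_on:
  assumes C: "compact C"
  shows "carried_by_compact (mu_on C) C"
  unfolding carried_by_compact_def
proof (intro conjI)
  have Cb: "C \<in> sets borel" using C by (simp add: borel_closed compact_imp_closed)
  show sets: "sets (mu_on C) = sets borel" unfolding mu_on_def by (simp add: sets_mu)
  have emeasure: "emeasure (mu_on C) A = emeasure \<mu> (C \<inter> A)" if "A \<in> sets borel" for A
    using that Cb unfolding mu_on_def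
    by (subst emeasure_restricted) (simp_all add: sets_mu Int_commute)
  show "compact C" by (rule C)
  show "emeasure (mu_on C) (- C) = 0"
    using emeasure[of "- C"] Cb by simp
  have "emeasure \<mu> C < \<infinity>"
    using unimodular C unfolding unimodular_haar_measure_def haar_measure_def by auto
  then show "finite_measure (mu_on C)"
    using emeasure[of UNIV] sets sets_eq_imp_space_eq[OF sets]
    by (intro finite_measureI) auto
qed

lemma integral_mu_on:
  fixes g :: "'g \<Rightarrow> 'c::{banach,second_countable_topology}"
  assumes C: "compact C" and g: "continuous_on UNIV g" and g0: "\<And>x. x \<notin> C \<Longrightarrow> g x = 0"
  shows "integrable \<mu> g" and "integral\<^sup>L \<mu> g = integral\<^sup>L (mu_on C) g"
proof -
  have Cb: "C \<in> sets borel" using C by (simp add: borel_closed compact_imp_closed)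
  have gm: "g \<in> borel_measurable \<mu>"
    using borel_measurable_continuous_onI[OF g] measurable_cong_sets[OF sets_mu refl] by blast
  have im: "(\<lambda>x. indicator C x :: real) \<in> borel_measurable \<mu>"
    by (intro borel_measurable_indicator) (simp add: sets_mu Cb)
  have eq: "(\<lambda>x. indicator C x *\<^sub>R g x) = g" using g0 by (auto simp: indicator_def)
  have "integrable (mu_on C) g"
    by (rule integrable_carried_by_compact[OF carried_by_compact_mu_on[OF C] g])
  then show "integrable \<mu> g"
    unfolding mu_on_def using integrable_density[OF gm im] eq by (simp add: ennreal_indicator)
  show "integral\<^sup>L \<mu> g = integral\<^sup>L (mu_on C) g"
    unfolding mu_on_def using integral_density[OF gm im] eq by (simp add: ennreal_indicator)
qed

lemma conv_eq_integral_mu_on: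
  fixes f f' :: "'g \<Rightarrow> 'b::{real_normed_field,second_countable_topology,banach}"
  assumes f: "continuous_on UNIV f" and f': "continuous_on UNIV f'"
    and S: "compact S" and f0: "\<And>y. y \<notin> S \<Longrightarrow> f y = 0"
  shows "conv \<mu> f f' x = (\<integral>y. f y * f' (- y + x) \<partial>mu_on S)"
  unfolding conv_def
  by (rule integral_mu_on(2)[OF S])
    (simp_all add: f0 continuous_intros f continuous_on_compose_UNIV[OF f'])

lemma continuous_on_conv:
  fixes f f' :: "'g \<Rightarrow> 'b::{real_normed_field,second_countable_topology,banach}"
  assumes f: "continuous_on UNIV f" and f': "continuous_on UNIV f'"
    and S: "compact S" and f0: "\<And>y. y \<notin> S \<Longrightarrow> f y = 0"
  shows "continuous_on UNIV (conv \<mu> f f')"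
proof -
  have eq: "conv \<mu> f f' = (\<lambda>x. \<integral>y. f y * f' (- y + x) \<partial>mu_on S)"
    by (rule ext) (rule conv_eq_integral_mu_on[OF f f' S f0])
  show ?thesis unfolding eq
    by (intro continuous_on_parametric_integral[OF carried_by_compact_mu_on[OF S]] continuous_intros
        continuous_on_compose_UNIV[OF f] continuous_on_compose_UNIV[OF f'])
qed

lemma conv_eq_0:
  assumes f0: "\<And>y. y \<notin> S \<Longrightarrow> f y = 0" and f'0: "\<And>y. y \<notin> S' \<Longrightarrow> f' y = 0"
    and x: "x \<notin> S + S'"
  shows "conv \<mu> f f' x = 0"
proof -
  have "f y * f' (- y + x) = 0" for y
  proof (rule ccontr)
    assume "f y * f' (- y + x) \<noteq> 0"
    then have "y + (- y + x) \<in> S + S'" using f0 f'0 by (intro set_plus_intro) auto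
    with x show False by (simp add: add.assoc[symmetric])
  qed
  then have "(\<lambda>y. f y * f' (- y + x)) = (\<lambda>y. 0)" by (rule ext)
  then show ?thesis unfolding conv_def by simp
qed

lemma integral_conv_mult:
  fixes g h \<phi> :: "'g \<Rightarrow> real"
  assumes g: "continuous_on UNIV g" and Sg: "compact Sg" and g0: "\<And>y. y \<notin> Sg \<Longrightarrow> g y = 0"
    and h: "continuous_on UNIV h" and Sh: "compact Sh" and h0: "\<And>y. y \<notin> Sh \<Longrightarrow> h y = 0"
    and \<phi>: "continuous_on UNIV \<phi>"
  shows "(\<integral>x. conv \<mu> g h x * \<phi> x \<partial>\<mu>) = (\<integral>z. g z * (\<integral>w. h w * \<phi> (z + w) \<partial>\<mu>) \<partial>\<mu>)"
proof -
  define E where "E = Sg + Sh"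
  have E: "compact E" unfolding E_def by (rule compact_set_plus_group[OF topological_group Sg Sh])
  note cg = continuous_on_compose_UNIV[OF g] and ch = continuous_on_compose_UNIV[OF h]
    and c\<phi> = continuous_on_compose_UNIV[OF \<phi>]
  have inner: "(\<integral>w. h w * \<phi> (z + w) \<partial>\<mu>) = (\<integral>w. h w * \<phi> (z + w) \<partial>mu_on Sh)" for z
    by (rule integral_mu_on(2)[OF Sh]) (simp_all add: h0 continuous_intros h c\<phi>)
  have c_inner: "continuous_on UNIV (\<lambda>z. \<integral>w. h w * \<phi> (z + w) \<partial>\<mu>)"
    unfolding inner
    by (intro continuous_on_parametric_integral[OF carried_by_compact_mu_on[OF Sh]]
        continuous_intros ch c\<phi>)
  have shift: "(\<integral>x. h (- z + x) * \<phi> x \<partial>mu_on E) = (\<integral>w. h w * \<phi> (z + w) \<partial>\<mu>)" if z: "z \<in> Sg" for z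
  proof -
    have "h (- z + x) * \<phi> x = 0" if "x \<notin> E" for x
    proof (rule ccontr)
      assume "h (- z + x) * \<phi> x \<noteq> 0"
      then have "z + (- z + x) \<in> E" unfolding E_def using z h0 by (intro set_plus_intro) auto
      with that show False by (simp add: add.assoc[symmetric])
    qed
    then have "(\<integral>x. h (- z + x) * \<phi> x \<partial>mu_on E) = (\<integral>x. h (- z + x) * \<phi> x \<partial>\<mu>)"
      by (intro integral_mu_on(2)[OF E, symmetric] continuous_intros ch \<phi>)
    also have "\<dots> = (\<integral>w. h (- z + (z + w)) * \<phi> (z + w) \<partial>\<mu>)"
      by (intro integral_translate_left[symmetric] borel_measurable_continuous_onI
          continuous_intros ch \<phi>)
    finally show ?thesis by (simp add: add.assoc[symmetric])
  qed
  have "(\<integral>x. conv \<mu> g h x * \<phi> x \<partial>\<mu>) = (\<integral>x. conv \<mu> g h x * \<phi> x \<partial>mu_on E)"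
  proof (rule integral_mu_on(2)[OF E])
    show "continuous_on UNIV (\<lambda>x. conv \<mu> g h x * \<phi> x)"
      by (intro continuous_intros continuous_on_conv[OF g h Sg g0] \<phi>)
    show "conv \<mu> g h x * \<phi> x = 0" if "x \<notin> E" for x
      using conv_eq_0[of Sg g Sh h x] g0 h0 that unfolding E_def by simp
  qed
  also have "\<dots> = (\<integral>x. \<integral>z. g z * (h (- z + x) * \<phi> x) \<partial>mu_on Sg \<partial>mu_on E)"
  proof -
    have "conv \<mu> g h x = (\<integral>z. g z * h (- z + x) \<partial>mu_on Sg)" for x
      using g h Sg g0 by (rule conv_eq_integral_mu_on)
    then have "conv \<mu> g h x * \<phi> x = (\<integral>z. g z * (h (- z + x) * \<phi> x) \<partial>mu_on Sg)" for x
      by (simp add: mult.assoc[symmetric])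
    then show ?thesis by simp
  qed
  also have "\<dots> = (\<integral>z. \<integral>x. g z * (h (- z + x) * \<phi> x) \<partial>mu_on E \<partial>mu_on Sg)"
    by (intro Fubini_carried_by_compact[OF carried_by_compact_mu_on[OF E]
          carried_by_compact_mu_on[OF Sg]]
        continuous_intros cg ch c\<phi>)
  also have "\<dots> = (\<integral>z. g z * (\<integral>w. h w * \<phi> (z + w) \<partial>\<mu>) \<partial>mu_on Sg)"
  proof (rule integral_cong_carried_by_compact[OF carried_by_compact_mu_on[OF Sg]])
    show "(\<lambda>z. \<integral>x. g z * (h (- z + x) * \<phi> x) \<partial>mu_on E) \<in> borel_measurable borel"
      by (intro borel_measurable_continuous_onI
          continuous_on_parametric_integral[OF carried_by_compact_mu_on[OF E]]
          continuous_intros cg ch c\<phi>)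
    show "(\<lambda>z. g z * (\<integral>w. h w * \<phi> (z + w) \<partial>\<mu>)) \<in> borel_measurable borel"
      by (intro borel_measurable_continuous_onI continuous_intros g c_inner)
  qed (simp add: shift)
  also have "\<dots> = (\<integral>z. g z * (\<integral>w. h w * \<phi> (z + w) \<partial>\<mu>) \<partial>\<mu>)"
    by (intro integral_mu_on(2)[OF Sg, symmetric] continuous_intros g c_inner) (simp add: g0)
  finally show ?thesis .
qed

end

section \<open>Averaging over a compact subgroup\<close>

locale compact_subgroup_average =
  fixes \<nu> :: "'g::{group_add,t2_space} measure" and K :: "'g set"
  assumes topological_group: "topological_group TYPE('g)"
    and subgroup: "is_subgroup K" and compact: "compact K"
    and normalized_haar: "normalized_haar_on K \<nu>"
begin

lemmas continuous_on_add [continuous_intros] = continuous_on_group_add[OF topological_group]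

lemmas continuous_on_minus [continuous_intros] = continuous_on_group_minus[OF topological_group]

lemma add_mem: "a \<in> K \<Longrightarrow> b \<in> K \<Longrightarrow> a + b \<in> K"
  and minus_mem: "a \<in> K \<Longrightarrow> - a \<in> K"
  using subgroup unfolding is_subgroup_def by auto

text \<open>\<open>\<nu>\<close> lives on the subspace \<sigma>-algebra of \<open>K\<close>; \<open>nu_borel\<close> is the same measure on the Borel
  sets of the whole group, where product measures and translations are available.\<close>

definition nu_borel :: "'g measure" where
  "nu_borel = distr \<nu> borel (\<lambda>x. x)"

lemma measurable_id_nu: "(\<lambda>x. x) \<in> measurable \<nu> borel"
proof -
  have "sets \<nu> = sets (restrict_space borel K)"
    using normalized_haar unfolding normalized_haar_on_def by auto
  then show ?thesis
    using measurable_restrict_space1[OF measurable_ident_sets[OF refl]] measurable_cong_sets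
    by blast
qed

lemma sets_nu_borel: "sets nu_borel = sets borel"
  unfolding nu_borel_def by simp

lemma space_nu_borel: "space nu_borel = UNIV"
  using sets_eq_imp_space_eq[OF sets_nu_borel] by simp

lemma emeasure_nu_borel: "A \<in> sets borel \<Longrightarrow> emeasure nu_borel A = emeasure \<nu> (A \<inter> K)"
  unfolding nu_borel_def using emeasure_distr[OF measurable_id_nu] normalized_haar
  unfolding normalized_haar_on_def by simp

lemma carried_by_compact_nu_borel: "carried_by_compact nu_borel K"
  unfolding carried_by_compact_def
proof (intro conjI)
  have Kb: "K \<in> sets borel" using compact by (simp add: borel_closed compact_imp_closed)
  show "sets nu_borel = sets borel" by (rule sets_nu_borel)
  show "compact K" by (rule compact)
  show "emeasure nu_borel (- K) = 0" using emeasure_nu_borel[of "- K"] Kb by simp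
  show "finite_measure nu_borel"
    using emeasure_nu_borel[of UNIV] normalized_haar space_nu_borel
    unfolding normalized_haar_on_def by (intro finite_measureI) auto
qed

lemma measure_nu_borel_space [simp]: "measure nu_borel (space nu_borel) = 1"
  using emeasure_nu_borel[of UNIV] normalized_haar space_nu_borel
  unfolding normalized_haar_on_def by (simp add: measure_def)

lemma integral_nu_borel:
  fixes g :: "'g \<Rightarrow> 'c::{banach,second_countable_topology}"
  assumes "g \<in> borel_measurable borel"
  shows "integral\<^sup>L \<nu> g = integral\<^sup>L nu_borel g"
  unfolding nu_borel_def using integral_distr[OF measurable_id_nu assms] by simp

lemma emeasure_nu_borel_translate_right:
  assumes k: "k \<in> K" and A: "A \<in> sets borel"
  shows "emeasure nu_borel ((\<lambda>x. x + k) ` A) = emeasure nu_borel A"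
proof -
  have AK: "A \<inter> K \<in> sets \<nu>"
    using A normalized_haar unfolding normalized_haar_on_def by (auto simp: sets_restrict_space)
  have "(\<lambda>x. x + k) ` A \<inter> K = (\<lambda>x. x + k) ` (A \<inter> K)"
    using k add_mem minus_mem by (auto simp: add.assoc intro!: image_eqI[where x = "_ + - k"])
  moreover have "(\<lambda>x. x + k) ` A = (\<lambda>x. x + - k) -` A"
    by (auto simp: add.assoc intro!: image_eqI[where x = "_ + - k"])
  moreover have "(\<lambda>x. x + - k) -` A \<in> sets borel"
    using A by (intro measurable_sets_borel[OF borel_measurable_continuous_onI] continuous_intros)
  ultimately show ?thesis
    using AK k A normalized_haar unfolding normalized_haar_on_def by (simp add: emeasure_nu_borel)
qed

lemma integral_nu_borel_translate_right:
  fixes g :: "'g \<Rightarrow> 'c::{banach,second_countable_topology}"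
  assumes k: "k \<in> K" and g: "g \<in> borel_measurable borel"
  shows "(\<integral>x. g (x + k) \<partial>nu_borel) = integral\<^sup>L nu_borel g"
proof (rule integral_invariant_bij[OF sets_nu_borel _ _ _ _ g, where \<sigma> = "\<lambda>x. x + - k"])
  show "(\<lambda>x. x + k) \<in> borel_measurable borel"
    by (intro borel_measurable_continuous_onI continuous_intros)
qed (simp_all add: add.assoc emeasure_nu_borel_translate_right[OF minus_mem[OF k], simplified])

text \<open>Inversion invariance of the Haar measure of \<open>K\<close> is not part of its definition; it follows
  from right invariance
    by averaging \<open>h (l - k)\<close> over \<open>K \<times> K\<close> in both orders.\<close>

lemma integral_nu_borel_uminus:
  fixes h :: "'g \<Rightarrow> real"
  assumes h: "continuous_on UNIV h"
  shows "(\<integral>k. h (- k) \<partial>nu_borel) = integral\<^sup>L nu_borel h"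
proof -
  note ch = continuous_on_compose_UNIV[OF h]
  have "integral\<^sup>L nu_borel h = (\<integral>k. integral\<^sup>L nu_borel h \<partial>nu_borel)" by simp
  also have "\<dots> = (\<integral>k. \<integral>l. h (l + - k) \<partial>nu_borel \<partial>nu_borel)"
  proof (rule integral_cong_carried_by_compact[OF carried_by_compact_nu_borel])
    show "(\<lambda>k. \<integral>l. h (l + - k) \<partial>nu_borel) \<in> borel_measurable borel"
      by (intro borel_measurable_continuous_onI
          continuous_on_parametric_integral[OF carried_by_compact_nu_borel] continuous_intros ch)
    show "integral\<^sup>L nu_borel h = (\<integral>l. h (l + - k) \<partial>nu_borel)" if "k \<in> K" for k
      using integral_nu_borel_translate_right[OF minus_mem[OF that], of h]
      by (simp add: borel_measurable_continuous_onI[OF h])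
  qed simp
  also have "\<dots> = (\<integral>l. \<integral>k. h (l + - k) \<partial>nu_borel \<partial>nu_borel)"
    by (intro Fubini_carried_by_compact[OF carried_by_compact_nu_borel carried_by_compact_nu_borel]
        continuous_intros ch)
  also have "\<dots> = (\<integral>l. (\<integral>k. h (- k) \<partial>nu_borel) \<partial>nu_borel)"
  proof (rule integral_cong_carried_by_compact[OF carried_by_compact_nu_borel])
    show "(\<lambda>l. \<integral>k. h (l + - k) \<partial>nu_borel) \<in> borel_measurable borel"
      by (intro borel_measurable_continuous_onI
          continuous_on_parametric_integral[OF carried_by_compact_nu_borel] continuous_intros ch)
    show "(\<integral>k. h (l + - k) \<partial>nu_borel) = (\<integral>k. h (- k) \<partial>nu_borel)" if "l \<in> K" for l
      using integral_nu_borel_translate_right[OF minus_mem[OF that], of "\<lambda>k. h (- k)"]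
      by (simp add: minus_add borel_measurable_continuous_onI continuous_intros ch)
  qed simp
  finally show ?thesis by simp
qed

definition L2_right :: "('g \<Rightarrow> complex) \<Rightarrow> 'g \<Rightarrow> 'g \<Rightarrow> real" where
  "L2_right v k y = sqrt (\<integral>k'. (cmod (v (k + y + k')))\<^sup>2 \<partial>nu_borel)"

definition L2_left :: "('g \<Rightarrow> complex) \<Rightarrow> 'g \<Rightarrow> 'g \<Rightarrow> real" where
  "L2_left v k' y = sqrt (\<integral>k. (cmod (v (- k + y + k')))\<^sup>2 \<partial>nu_borel)"

lemma continuous_on_L2_right:
  assumes "continuous_on UNIV v"
  shows "continuous_on UNIV (\<lambda>p. L2_right v (fst p) (snd p))"
  unfolding L2_right_def
  by (intro continuous_on_real_sqrt
      continuous_on_parametric_integral[OF carried_by_compact_nu_borel]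
      continuous_intros continuous_on_compose_UNIV[OF assms])

lemma continuous_on_L2_left:
  assumes "continuous_on UNIV v"
  shows "continuous_on UNIV (\<lambda>p. L2_left v (fst p) (snd p))"
  unfolding L2_left_def
  by (intro continuous_on_real_sqrt
      continuous_on_parametric_integral[OF carried_by_compact_nu_borel]
      continuous_intros continuous_on_compose_UNIV[OF assms])

lemma Aop_eq_nu_borel:
  assumes v: "continuous_on UNIV v"
  shows "Aop \<nu> v y = sqrt (\<integral>k. \<integral>k'. (cmod (v (k + y + k')))\<^sup>2 \<partial>nu_borel \<partial>nu_borel)"
proof -
  note cv = continuous_on_compose_UNIV[OF v]
  have "(\<integral>k'. (cmod (v (k + y + k')))\<^sup>2 \<partial>\<nu>) = (\<integral>k'. (cmod (v (k + y + k')))\<^sup>2 \<partial>nu_borel)" for k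
    by (intro integral_nu_borel borel_measurable_continuous_onI continuous_intros cv)
  then have "(\<integral>k. \<integral>k'. (cmod (v (k + y + k')))\<^sup>2 \<partial>\<nu> \<partial>\<nu>)
      = (\<integral>k. \<integral>k'. (cmod (v (k + y + k')))\<^sup>2 \<partial>nu_borel \<partial>\<nu>)"
    by simp
  also have "\<dots> = (\<integral>k. \<integral>k'. (cmod (v (k + y + k')))\<^sup>2 \<partial>nu_borel \<partial>nu_borel)"
    by (intro integral_nu_borel borel_measurable_continuous_onI
        continuous_on_parametric_integral[OF carried_by_compact_nu_borel] continuous_intros cv)
  finally show ?thesis unfolding Aop_def by simp
qed

lemma Aop_eq_L2_right:
  assumes v: "continuous_on UNIV v"
  shows "Aop \<nu> v y = sqrt (\<integral>k. (L2_right v k y)\<^sup>2 \<partial>nu_borel)"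
  unfolding Aop_eq_nu_borel[OF v] L2_right_def by simp

lemma Aop_eq_L2_left:
  assumes v: "continuous_on UNIV v"
  shows "Aop \<nu> v y = sqrt (\<integral>k'. (L2_left v k' y)\<^sup>2 \<partial>nu_borel)"
proof -
  note cv = continuous_on_compose_UNIV[OF v]
  have "(\<integral>k'. (L2_left v k' y)\<^sup>2 \<partial>nu_borel)
      = (\<integral>k'. \<integral>k. (cmod (v (- k + y + k')))\<^sup>2 \<partial>nu_borel \<partial>nu_borel)"
    unfolding L2_left_def by simp
  also have "\<dots> = (\<integral>k. \<integral>k'. (cmod (v (- k + y + k')))\<^sup>2 \<partial>nu_borel \<partial>nu_borel)"
    by (intro Fubini_carried_by_compact[OF carried_by_compact_nu_borel carried_by_compact_nu_borel]
        continuous_intros cv)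
  also have "\<dots> = (\<integral>k. \<integral>k'. (cmod (v (k + y + k')))\<^sup>2 \<partial>nu_borel \<partial>nu_borel)"
    using integral_nu_borel_uminus[of "\<lambda>k. \<integral>k'. (cmod (v (k + y + k')))\<^sup>2 \<partial>nu_borel"]
    by (simp add: continuous_on_parametric_integral[OF carried_by_compact_nu_borel]
        continuous_intros cv)
  also have "\<dots> = (\<integral>k. (L2_right v k y)\<^sup>2 \<partial>nu_borel)"
    unfolding L2_right_def by simp
  finally show ?thesis by (simp add: Aop_eq_L2_right[OF v])
qed

lemma continuous_on_Aop:
  assumes v: "continuous_on UNIV v"
  shows "continuous_on UNIV (Aop \<nu> v)"
  unfolding Aop_eq_L2_right[OF v, abs_def]
  by (intro continuous_on_real_sqrt
      continuous_on_parametric_integral[OF carried_by_compact_nu_borel]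
      continuous_intros continuous_on_curried_compose[OF continuous_on_L2_right[OF v]])

lemma Aop_eq_0:
  assumes v: "continuous_on UNIV v" and v0: "\<And>y. y \<notin> S \<Longrightarrow> v y = 0" and x: "x \<notin> K + S + K"
  shows "Aop \<nu> v x = 0"
proof -
  have "L2_right v k x = 0" if "k \<in> K" for k
  proof -
    have "(\<integral>k'. (cmod (v (k + x + k')))\<^sup>2 \<partial>nu_borel) = (\<integral>k'. 0 \<partial>nu_borel)"
      using v0 notin_set_plus_translate[OF x that _ subgroup]
      by (intro integral_cong_carried_by_compact[OF carried_by_compact_nu_borel]
          borel_measurable_continuous_onI continuous_intros continuous_on_compose_UNIV[OF v]) auto
    then show ?thesis unfolding L2_right_def by simp
  qed
  then have "(\<integral>k. (L2_right v k x)\<^sup>2 \<partial>nu_borel) = (\<integral>k. 0 \<partial>nu_borel)"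
    by (intro integral_cong_carried_by_compact[OF carried_by_compact_nu_borel]
        borel_measurable_continuous_onI continuous_intros
        continuous_on_curried_compose[OF continuous_on_L2_right[OF v]]) auto
  then show ?thesis by (simp add: Aop_eq_L2_right[OF v])
qed

lemma Aop_translate_left:
  assumes v: "continuous_on UNIV v" and k: "k \<in> K"
  shows "Aop \<nu> v (k + y) = Aop \<nu> v y"
proof -
  have "(\<integral>l. (L2_right v (l + k) y)\<^sup>2 \<partial>nu_borel) = (\<integral>l. (L2_right v l y)\<^sup>2 \<partial>nu_borel)"
    by (intro integral_nu_borel_translate_right[OF k] borel_measurable_continuous_onI
        continuous_intros continuous_on_curried_compose[OF continuous_on_L2_right[OF v]])
  then show ?thesis by (simp add: Aop_eq_L2_right[OF v] L2_right_def add.assoc)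
qed

end

section \<open>The inequalities for the operator \<open>Aop\<close>\<close>

locale unimodular_group_compact_subgroup =
  compact_subgroup_average \<nu> K + unimodular_group \<mu>
  for \<mu> \<nu> :: "'g::{group_add,t2_space} measure" and K :: "'g set"
begin

lemma compact_double_coset: "compact S \<Longrightarrow> compact (K + S + K)"
  by (intro compact_set_plus_group[OF topological_group] compact)

lemma conv_eq_integral_translate:
  fixes f f' :: "'g \<Rightarrow> 'b::{real_normed_field,second_countable_topology,banach}"
  assumes f: "continuous_on UNIV f" and f': "continuous_on UNIV f'"
    and S: "compact S" and f0: "\<And>y. y \<notin> S \<Longrightarrow> f y = 0" and k: "k \<in> K" and l: "l \<in> K"
  shows "conv \<mu> f f' (k + x + k')
    = (\<integral>z. f (k + z + l) * f' (- l + (- z + x) + k') \<partial>mu_on (K + S + K))"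
proof -
  note cf = continuous_on_compose_UNIV[OF f] and cf' = continuous_on_compose_UNIV[OF f']
  have "conv \<mu> f f' (k + x + k') = (\<integral>z. f (k + z + l) * f' (- (k + z + l) + (k + x + k')) \<partial>\<mu>)"
    unfolding conv_def
    by (intro integral_translate_both[symmetric] borel_measurable_continuous_onI
        continuous_intros cf cf')
  also have "\<dots> = (\<integral>z. f (k + z + l) * f' (- l + (- z + x) + k') \<partial>\<mu>)"
  proof -
    have "- (k + z + l) + (k + x + k') = - l + (- z + x) + k'" for z
      by (simp only: minus_add add.assoc minus_add_cancel)
    then show ?thesis by (simp only:)
  qed
  also have "\<dots> = (\<integral>z. f (k + z + l) * f' (- l + (- z + x) + k') \<partial>mu_on (K + S + K))"
    using f0 notin_set_plus_translate[OF _ k l subgroup]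
    by (intro integral_mu_on(2) compact_double_coset S continuous_intros cf cf') auto
  finally show ?thesis .
qed

lemma norm_conv_le_L2_product:
  assumes f: "continuous_on UNIV f" and f': "continuous_on UNIV f'"
    and S: "compact S" and f0: "\<And>y. y \<notin> S \<Longrightarrow> f y = 0"
    and k: "k \<in> K" and k': "k' \<in> K"
  shows "cmod (conv \<mu> f f' (k + x + k'))
    \<le> (\<integral>z. L2_right f k z * L2_left f' k' (- z + x) \<partial>mu_on (K + S + K))"
proof -
  define C where "C = K + S + K"
  have C: "carried_by_compact (mu_on C) C"
    unfolding C_def by (intro carried_by_compact_mu_on compact_double_coset S)
  note N = carried_by_compact_nu_borel
  define H where "H l z = f (k + z + l) * f' (- l + (- z + x) + k')" for l z
  have cH: "continuous_on UNIV (\<lambda>p. H (fst p) (snd p))"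
    unfolding H_def
    by (intro continuous_intros continuous_on_compose_UNIV[OF f] continuous_on_compose_UNIV[OF f'])
  have "conv \<mu> f f' (k + x + k') = (\<integral>l. \<integral>z. H l z \<partial>mu_on C \<partial>nu_borel)"
    using conv_eq_integral_translate[OF f f' S f0 k] unfolding H_def C_def
    by (subst integral_cong_carried_by_compact[OF N, of _ "\<lambda>_. conv \<mu> f f' (k + x + k')"])
      (simp_all add: borel_measurable_continuous_onI
        continuous_on_parametric_integral[OF C[unfolded C_def] cH[unfolded H_def]])
  then have "cmod (conv \<mu> f f' (k + x + k')) \<le> (\<integral>l. cmod (\<integral>z. H l z \<partial>mu_on C) \<partial>nu_borel)"
    by (simp add: integral_norm_bound)
  also have "\<dots> \<le> (\<integral>l. \<integral>z. cmod (H l z) \<partial>mu_on C \<partial>nu_borel)"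
    by (intro integral_mono_carried_by_compact[OF N] integral_norm_bound
        continuous_intros continuous_on_parametric_integral[OF C] cH)
  also have "\<dots> = (\<integral>z. \<integral>l. cmod (H l z) \<partial>nu_borel \<partial>mu_on C)"
    by (intro Fubini_carried_by_compact[OF N C] continuous_intros cH)
  also have "\<dots> \<le> (\<integral>z. L2_right f k z * L2_left f' k' (- z + x) \<partial>mu_on C)"
  proof (rule integral_mono_carried_by_compact[OF C])
    show "continuous_on UNIV (\<lambda>z. \<integral>l. cmod (H l z) \<partial>nu_borel)"
      by (intro continuous_on_parametric_integral[OF N] continuous_intros
          continuous_on_curried_compose[OF cH])
    show "continuous_on UNIV (\<lambda>z. L2_right f k z * L2_left f' k' (- z + x))"
      by (intro continuous_intros continuous_on_curried_compose[OF continuous_on_L2_right[OF f]]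
          continuous_on_curried_compose[OF continuous_on_L2_left[OF f']])
    show "(\<integral>l. cmod (H l z) \<partial>nu_borel) \<le> L2_right f k z * L2_left f' k' (- z + x)" for z
      unfolding H_def L2_right_def L2_left_def norm_mult
      by (intro Cauchy_Schwarz_carried_by_compact[OF N] continuous_intros
          continuous_on_compose_UNIV[OF f] continuous_on_compose_UNIV[OF f'])
  qed
  finally show ?thesis unfolding C_def .
qed

lemma Aop_conv_le_conv_Aop:
  assumes f: "continuous_on UNIV f" and f': "continuous_on UNIV f'"
    and S: "compact S" and f0: "\<And>y. y \<notin> S \<Longrightarrow> f y = 0"
  shows "Aop \<nu> (conv \<mu> f f') x \<le> conv \<mu> (Aop \<nu> f) (Aop \<nu> f') x"
proof -
  define C where "C = K + S + K"
  have C: "compact C" unfolding C_def by (intro compact_double_coset S)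
  note MC = carried_by_compact_mu_on[OF C] and N = carried_by_compact_nu_borel
  define a where "a k z = L2_right f k z" for k z
  define b where "b k' z = L2_left f' k' (- z + x)" for k' z
  have ca: "continuous_on UNIV (\<lambda>p. a (fst p) (snd p))"
    unfolding a_def using continuous_on_L2_right[OF f] by simp
  have cb: "continuous_on UNIV (\<lambda>p. b (fst p) (snd p))"
    unfolding b_def
    by (intro continuous_on_curried_compose[OF continuous_on_L2_left[OF f']] continuous_intros)
  have cP: "continuous_on UNIV (\<lambda>p. (\<integral>z. a (fst p) z * b (snd p) z \<partial>mu_on C)\<^sup>2)"
    by (intro continuous_intros continuous_on_parametric_integral[OF MC]
        continuous_on_curried_compose[OF ca] continuous_on_curried_compose[OF cb])
  have cu: "continuous_on UNIV (conv \<mu> f f')" by (rule continuous_on_conv[OF f f' S f0])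
  have "Aop \<nu> (conv \<mu> f f') x
      = sqrt (\<integral>k. \<integral>k'. (cmod (conv \<mu> f f' (k + x + k')))\<^sup>2 \<partial>nu_borel \<partial>nu_borel)"
    by (rule Aop_eq_nu_borel[OF cu])
  also have "\<dots> \<le> sqrt (\<integral>k. \<integral>k'. (\<integral>z. a k z * b k' z \<partial>mu_on C)\<^sup>2 \<partial>nu_borel \<partial>nu_borel)"
  proof -
    have "cmod (conv \<mu> f f' (k + x + k')) \<le> (\<integral>z. a k z * b k' z \<partial>mu_on C)"
      if "k \<in> K" "k' \<in> K" for k k'
      unfolding a_def b_def C_def using norm_conv_le_L2_product[OF f f' S f0 that] .
    then show ?thesis
      by (intro real_sqrt_le_mono integral_mono_carried_by_compact[OF N] power_mono
          continuous_on_parametric_integral[OF N] continuous_intros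
          continuous_on_compose_UNIV[OF cu] continuous_on_curried_compose[OF cP]) auto
  qed
  also have "\<dots> \<le> (\<integral>z. sqrt (\<integral>k. (a k z)\<^sup>2 \<partial>nu_borel) * sqrt (\<integral>k'. (b k' z)\<^sup>2 \<partial>nu_borel) \<partial>mu_on C)"
    by (rule Minkowski_integral_L2_product[OF N N MC ca cb]) (simp add: a_def L2_right_def)
  also have "\<dots> = (\<integral>z. Aop \<nu> f z * Aop \<nu> f' (- z + x) \<partial>mu_on C)"
    by (simp add: a_def b_def Aop_eq_L2_right[OF f] Aop_eq_L2_left[OF f'])
  also have "\<dots> = conv \<mu> (Aop \<nu> f) (Aop \<nu> f') x"
    using continuous_on_Aop[OF f] continuous_on_Aop[OF f'] C Aop_eq_0[OF f f0]
    unfolding C_def by (intro conv_eq_integral_mu_on[symmetric]) auto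
  finally show ?thesis .
qed

lemma integral_Aop_mult_spherical:
  assumes v: "continuous_on UNIV v" and S: "compact S" and v0: "\<And>y. y \<notin> S \<Longrightarrow> v y = 0"
    and \<phi>: "spherical_function K \<nu> \<phi>"
  shows "(\<integral>w. Aop \<nu> v w * \<phi> (y + w) \<partial>\<mu>) = \<phi> y * (\<integral>w. Aop \<nu> v w * \<phi> w \<partial>\<mu>)"
proof -
  have c\<phi>: "continuous_on UNIV \<phi>"
    and average: "\<And>x y. (\<integral>k. \<phi> (x + k + y) \<partial>\<nu>) = \<phi> x * \<phi> y"
    using \<phi> unfolding spherical_function_def by auto
  define C where "C = K + S + K"
  have C: "compact C" unfolding C_def by (intro compact_double_coset S)
  note MC = carried_by_compact_mu_on[OF C] and N = carried_by_compact_nu_borel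
  note cA = continuous_on_Aop[OF v] and cA' = continuous_on_compose_UNIV[OF continuous_on_Aop[OF v]]
    and c\<phi>' = continuous_on_compose_UNIV[OF c\<phi>]
  have A0: "Aop \<nu> v w = 0" if "w \<notin> C" for w
    using v v0 that unfolding C_def by (rule Aop_eq_0)
  have translate: "(\<integral>w. Aop \<nu> v w * \<phi> (y + k + w) \<partial>mu_on C) = (\<integral>w. Aop \<nu> v w * \<phi> (y + w) \<partial>\<mu>)"
    if k: "k \<in> K" for k
  proof -
    have "(\<integral>w. Aop \<nu> v w * \<phi> (y + k + w) \<partial>mu_on C) = (\<integral>w. Aop \<nu> v w * \<phi> (y + k + w) \<partial>\<mu>)"
      using A0 by (intro integral_mu_on(2)[OF C, symmetric] continuous_intros cA c\<phi>') auto
    also have "\<dots> = (\<integral>w. Aop \<nu> v (k + w) * \<phi> (y + (k + w)) \<partial>\<mu>)"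
      by (simp add: Aop_translate_left[OF v k] add.assoc)
    also have "\<dots> = (\<integral>w. Aop \<nu> v w * \<phi> (y + w) \<partial>\<mu>)"
      by (intro integral_translate_left borel_measurable_continuous_onI continuous_intros cA c\<phi>')
    finally show ?thesis .
  qed
  have "(\<integral>w. Aop \<nu> v w * \<phi> (y + w) \<partial>\<mu>)
      = (\<integral>k. \<integral>w. Aop \<nu> v w * \<phi> (y + k + w) \<partial>mu_on C \<partial>nu_borel)"
    using translate
    by (subst integral_cong_carried_by_compact[OF N, of _ "\<lambda>_. \<integral>w. Aop \<nu> v w * \<phi> (y + w) \<partial>\<mu>"])
      (simp_all add: borel_measurable_continuous_onI continuous_on_parametric_integral[OF MC]
        continuous_intros cA' c\<phi>')
  also have "\<dots> = (\<integral>w. \<integral>k. Aop \<nu> v w * \<phi> (y + k + w) \<partial>nu_borel \<partial>mu_on C)"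
    by (intro Fubini_carried_by_compact[OF N MC] continuous_intros cA' c\<phi>')
  also have "\<dots> = (\<integral>w. Aop \<nu> v w * (\<phi> y * \<phi> w) \<partial>mu_on C)"
    by (simp add: integral_nu_borel[symmetric] average borel_measurable_continuous_onI
        continuous_intros c\<phi>')
  also have "\<dots> = \<phi> y * (\<integral>w. Aop \<nu> v w * \<phi> w \<partial>mu_on C)"
    by (simp add: mult.left_commute)
  also have "(\<integral>w. Aop \<nu> v w * \<phi> w \<partial>mu_on C) = (\<integral>w. Aop \<nu> v w * \<phi> w \<partial>\<mu>)"
    using A0 by (intro integral_mu_on(2)[OF C, symmetric] continuous_intros cA c\<phi>) auto
  finally show ?thesis .
qed

lemma integral_Aop_conv_le:
  assumes f: "continuous_on UNIV f" and f': "continuous_on UNIV f'"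
    and S: "compact S" and f0: "\<And>y. y \<notin> S \<Longrightarrow> f y = 0"
    and S': "compact S'" and f'0: "\<And>y. y \<notin> S' \<Longrightarrow> f' y = 0"
    and \<phi>: "spherical_function K \<nu> \<phi>" and \<phi>_nonneg: "\<And>x. \<phi> x \<ge> 0"
  shows "(\<integral>x. Aop \<nu> (conv \<mu> f f') x * \<phi> x \<partial>\<mu>)
    \<le> (\<integral>y. Aop \<nu> f y * \<phi> y \<partial>\<mu>) * (\<integral>x. Aop \<nu> f' x * \<phi> x \<partial>\<mu>)"
proof -
  have c\<phi>: "continuous_on UNIV \<phi>" using \<phi> unfolding spherical_function_def by auto
  have cu: "continuous_on UNIV (conv \<mu> f f')" by (rule continuous_on_conv[OF f f' S f0])
  have u0: "conv \<mu> f f' y = 0" if "y \<notin> S + S'" for y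
    using conv_eq_0[of S f S' f' y] f0 f'0 that by simp
  note cA = continuous_on_Aop[OF f] and cA' = continuous_on_Aop[OF f']
  have S'': "compact (K + S + K)" "compact (K + S' + K)" "compact (K + (S + S') + K)"
    using S S' by (auto intro: compact_double_coset compact_set_plus_group[OF topological_group])
  have A0: "Aop \<nu> f y = 0" if "y \<notin> K + S + K" for y using f f0 that by (rule Aop_eq_0)
  have A'0: "Aop \<nu> f' y = 0" if "y \<notin> K + S' + K" for y
    using f' f'0 that by (rule Aop_eq_0)
  have "(\<integral>x. Aop \<nu> (conv \<mu> f f') x * \<phi> x \<partial>\<mu>) \<le> (\<integral>x. conv \<mu> (Aop \<nu> f) (Aop \<nu> f') x * \<phi> x \<partial>\<mu>)"
  proof (rule integral_mono)
    show "integrable \<mu> (\<lambda>x. Aop \<nu> (conv \<mu> f f') x * \<phi> x)"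
      using Aop_eq_0[OF cu u0]
      by (intro integral_mu_on(1)[OF S''(3)] continuous_intros continuous_on_Aop[OF cu] c\<phi>) auto
    show "integrable \<mu> (\<lambda>x. conv \<mu> (Aop \<nu> f) (Aop \<nu> f') x * \<phi> x)"
      using conv_eq_0[of "K + S + K" "Aop \<nu> f" "K + S' + K" "Aop \<nu> f'"] A0 A'0
      by (intro integral_mu_on(1)[OF compact_set_plus_group[OF topological_group S''(1,2)]]
          continuous_intros continuous_on_conv[OF cA cA' S''(1) A0] c\<phi>) auto
    show "Aop \<nu> (conv \<mu> f f') x * \<phi> x \<le> conv \<mu> (Aop \<nu> f) (Aop \<nu> f') x * \<phi> x" for x
      by (intro mult_right_mono Aop_conv_le_conv_Aop[OF f f' S f0] \<phi>_nonneg)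
  qed
  also have "\<dots> = (\<integral>z. Aop \<nu> f z * (\<integral>w. Aop \<nu> f' w * \<phi> (z + w) \<partial>\<mu>) \<partial>\<mu>)"
    by (rule integral_conv_mult[OF cA S''(1) A0 cA' S''(2) A'0 c\<phi>])
  also have "\<dots> = (\<integral>z. Aop \<nu> f z * \<phi> z \<partial>\<mu>) * (\<integral>w. Aop \<nu> f' w * \<phi> w \<partial>\<mu>)"
    by (simp add: integral_Aop_mult_spherical[OF f' S' f'0 \<phi>] mult.assoc[symmetric])
  finally show ?thesis .
qed

end

theorem mainTheorem4:
  fixes \<mu> \<nu> :: "('g::{group_add,t2_space}) measure"
    and K :: "'g set"
    and f f' :: "'g \<Rightarrow> complex"
    and \<phi> :: "'g \<Rightarrow> real"
  assumes G_lc: "locally_compact_group TYPE('g)"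
    and G_connected: "connected (UNIV :: 'g set)"
    and G_noncompact: "\<not> compact (UNIV :: 'g set)"
    and G_finite_centre: "finite (group_center :: 'g set)"
    and K_max: "maximal_compact_subgroup K"
    and haar: "unimodular_haar_measure \<mu>"
    and haarK: "normalized_haar_on K \<nu>"
    and f: "f \<in> Cc" and f': "f' \<in> Cc"
  shows "(\<forall>x. Aop \<nu> (conv \<mu> f f') x \<le> conv \<mu> (Aop \<nu> f) (Aop \<nu> f') x)
       \<and> ((spherical_function K \<nu> \<phi> \<and> (\<forall>x. \<phi> x > 0)) \<longrightarrow>
            (\<integral>x. Aop \<nu> (conv \<mu> f f') x * \<phi> x \<partial>\<mu>)
              \<le> (\<integral>y. Aop \<nu> f y * \<phi> y \<partial>\<mu>) * (\<integral>x. Aop \<nu> f' x * \<phi> x \<partial>\<mu>))"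
proof -
  interpret unimodular_group_compact_subgroup \<mu> \<nu> K
    using G_lc K_max haar haarK
    unfolding locally_compact_group_def maximal_compact_subgroup_def
    by unfold_locales auto
  define S where "S = closure {x. f x \<noteq> 0}"
  define S' where "S' = closure {x. f' x \<noteq> 0}"
  have fc: "continuous_on UNIV f" and Sc: "compact S" and f'c: "continuous_on UNIV f'"
    and S'c: "compact S'"
    using f f' unfolding Cc_def S_def S'_def by auto
  have f0: "f y = 0" if "y \<notin> S" for y
    using that closure_subset[of "{x. f x \<noteq> 0}"] unfolding S_def by auto
  have f'0: "f' y = 0" if "y \<notin> S'" for y
    using that closure_subset[of "{x. f' x \<noteq> 0}"] unfolding S'_def by auto
  show ?thesis
    using Aop_conv_le_conv_Aop[OF fc f'c Sc f0] integral_Aop_conv_le[OF fc f'c Sc f0 S'c f'0]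
    by (auto intro: less_imp_le)
qed

end
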